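(* Let $q$ be a prime power, $n\ge2$, and let $\mathrm{M}=\{(m_{i,j})\in\mathrm{H}_n(q^2): m_{i,i}=0 \text{ for all } 1\le i\le n\}$ be the additive $2$-code of Hermitian matrices with zero main diagonal. Then $\mathrm{M}$ is not a $t$-design for any $t$ with $1\le t\le n$.
   Context: For $a\in\mathbb{F}_{q^2}$ write $\bar a=a^q$; $A^*$ is the conjugate transpose; $\mathrm{H}_n(q^2)=\{A\in\mathbb{F}_{q^2}^{n\times n}:A^*=A\}$. Designs: fix a nontrivial character $\chi$ of $(\mathbb{F}_q,+)$, $\langle A,B\rangle=\chi(\mathrm{tr}(A^*B))$; $\mathrm{H}_k$ is the set of rank-$k$ matrices in $\mathrm{H}_n(q^2)$; $Q_k(i)=\sum_{A\in\mathrm{H}_k}\langle A,B\rangle$ for $B\in\mathrm{H}_i$; for $\mathrm{C}\subseteq\mathrm{H}_n(q^2)$ the inner distribution is $A_i=|\{(X,Y)\in\mathrm{C}^2:\mathrm{rk}(X-Y)=i\}|/|\mathrm{C}|$ and the dual inner distribution is $A'_k=\sum_iQ_k(i)A_i$; $\mathrm{C}$ is a $t$-design if $A'_1=\dots=A'_t=0$. *)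

theory Defs
  imports Complex_Main "Jordan_Normal_Form.DL_Rank"
begin

text \<open>Setting: 'a is a finite field with q^2 elements; conjugation is a \<mapsto> a^q;
  F_q is the fixed field {a. a^q = a}. Matrices are n x n Jordan_Normal_Form matrices.\<close>

definition conj_q :: "nat \<Rightarrow> 'a::field \<Rightarrow> 'a" where
  "conj_q q a = a ^ q"

definition Fq :: "nat \<Rightarrow> 'a::field set" where
  "Fq q = {a. a ^ q = a}"

definition conj_transpose :: "nat \<Rightarrow> 'a::field mat \<Rightarrow> 'a mat" where
  "conj_transpose q A = map_mat (conj_q q) (transpose_mat A)"

definition mat_trace :: "'a::comm_ring_1 mat \<Rightarrow> 'a" where
  "mat_trace A = (\<Sum>i<dim_row A. A $$ (i, i))"

definition mat_rank :: "nat \<Rightarrow> 'a::field mat \<Rightarrow> nat" where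
  "mat_rank n A = vec_space.rank n A"

definition herm :: "nat \<Rightarrow> nat \<Rightarrow> 'a::field mat set" where
  "herm q n = {A \<in> carrier_mat n n. conj_transpose q A = A}"

definition herm_rank :: "nat \<Rightarrow> nat \<Rightarrow> nat \<Rightarrow> 'a::field mat set" where
  "herm_rank q n k = {A \<in> herm q n. mat_rank n A = k}"

definition nontrivial_add_char :: "nat \<Rightarrow> ('a::field \<Rightarrow> complex) \<Rightarrow> bool" where
  "nontrivial_add_char q \<chi> \<longleftrightarrow>
     (\<forall>x\<in>Fq q. \<chi> x \<noteq> 0) \<and>
     (\<forall>x\<in>Fq q. \<forall>y\<in>Fq q. \<chi> (x + y) = \<chi> x * \<chi> y) \<and>
     (\<exists>x\<in>Fq q. \<chi> x \<noteq> 1)"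

definition pairing :: "nat \<Rightarrow> ('a::field \<Rightarrow> complex) \<Rightarrow> 'a mat \<Rightarrow> 'a mat \<Rightarrow> complex" where
  "pairing q \<chi> A B = \<chi> (mat_trace (conj_transpose q A * B))"

text \<open>Q_k(i) = sum over A in H_k of <A,B>, for (any, here a chosen) B in H_i.\<close>
definition Qnum :: "nat \<Rightarrow> nat \<Rightarrow> ('a::field \<Rightarrow> complex) \<Rightarrow> nat \<Rightarrow> nat \<Rightarrow> complex" where
  "Qnum q n \<chi> k i =
     (let B = (SOME B. B \<in> (herm_rank q n i :: 'a mat set))
      in \<Sum>A\<in>herm_rank q n k. pairing q \<chi> A B)"

definition inner_dist :: "nat \<Rightarrow> 'a::field mat set \<Rightarrow> nat \<Rightarrow> real" where
  "inner_dist n C i =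
     real (card {(X, Y). X \<in> C \<and> Y \<in> C \<and> mat_rank n (X - Y) = i}) / real (card C)"

definition dual_inner_dist :: "nat \<Rightarrow> nat \<Rightarrow> ('a::field \<Rightarrow> complex) \<Rightarrow> 'a mat set \<Rightarrow> nat \<Rightarrow> complex" where
  "dual_inner_dist q n \<chi> C k = (\<Sum>i\<le>n. Qnum q n \<chi> k i * complex_of_real (inner_dist n C i))"

definition is_t_design :: "nat \<Rightarrow> nat \<Rightarrow> ('a::field \<Rightarrow> complex) \<Rightarrow> nat \<Rightarrow> 'a mat set \<Rightarrow> bool" where
  "is_t_design q n \<chi> t C \<longleftrightarrow> (\<forall>k\<in>{1..t}. dual_inner_dist q n \<chi> C k = 0)"

definition zero_diag_herm :: "nat \<Rightarrow> nat \<Rightarrow> 'a::field mat set" where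
  "zero_diag_herm q n = {A \<in> herm q n. \<forall>i<n. A $$ (i, i) = 0}"

end

theory Submission
  imports Defs "HOL-Number_Theory.Residues"
begin

(* It suffices to show A'_1 <> 0. Over F_(q^2), the trace y + bar y maps onto F_q and the norm
   bar y * y onto F_q - {0}; with these, Gaussian elimination by *-congruences B |-> P^* B P brings
   every Hermitian matrix to diag(1, ..., 1, 0, ..., 0) with rk B ones. The character sum
   sum_(A in H_1) <A, B> is invariant under *-congruence of B, so it only depends on rk B and equals
   Q_1(rk B). As M is additive, this gives A'_1 = sum_(A in H_1) sum_(Z in M) chi(tr(A Z)), and the
   inner sum is |M| for diagonal A and 0 otherwise: for non-diagonal A, Z |-> tr(A Z) maps M onto F_q.
   Hence A'_1 = |M| * #{A in H_1. A diagonal} > 0, as diag(1, 0, ..., 0) is such an A. *)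

lemma image_eq_if_card_fibres_le:
  assumes "finite A" "finite B" "f ` A \<subseteq> B" "0 < k"
    and fibre: "\<And>b. card {a\<in>A. f a = b} \<le> k" and "k * card B \<le> card A"
  shows "f ` A = B"
proof -
  have "card A = card (\<Union>b\<in>f ` A. {a\<in>A. f a = b})"
    by (rule arg_cong[where f = card]) auto
  also have "\<dots> \<le> (\<Sum>b\<in>f ` A. card {a\<in>A. f a = b})"
    using assms(1) by (intro card_UN_le) auto
  also have "\<dots> \<le> k * card (f ` A)"
    using sum_mono[of "f ` A", OF fibre] by (simp add: mult.commute)
  finally have "card B \<le> card (f ` A)"
    using assms(4,6) by (meson le_trans mult_le_cancel1)
  then show ?thesis
    using assms(2,3) card_seteq by blast
qed

lemma card_fibre_le_if_translates:
  assumes "finite K" and "\<And>a0 a. a0 \<in> A \<Longrightarrow> a \<in> A \<Longrightarrow> f a0 = f a \<Longrightarrow> a \<in> g a0 ` K"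
  shows "card {a\<in>A. f a = b} \<le> card K"
proof (cases "\<exists>a0\<in>A. f a0 = b")
  case True
  then obtain a0 where "a0 \<in> A" "f a0 = b" by blast
  then have "{a\<in>A. f a = b} \<subseteq> g a0 ` K"
    using assms(2) by auto
  then show ?thesis
    using assms(1) by (meson card_image_le card_mono finite_imageI le_trans)
next
  case False
  then have "{a\<in>A. f a = b} = {}"
    by blast
  then show ?thesis
    by (metis card.empty zero_le)
qed

lemma card_le_degree_if_roots:
  fixes p :: "'a::idom poly"
  assumes "p \<noteq> 0" "degree p \<le> d" "\<And>x. x \<in> S \<Longrightarrow> poly p x = 0"
  shows "card S \<le> d"
proof -
  have "card S \<le> card {x. poly p x = 0}"
    using assms(1,3) poly_roots_finite by (intro card_mono) auto
  also have "\<dots> \<le> degree p"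
    by (rule card_poly_roots_bound[OF assms(1)])
  finally show ?thesis
    using assms(2) by simp
qed

text \<open>The library's \<open>finite_field_power_card_eq_same\<close> needs the sort \<open>finite_field\<close>.\<close>

lemma power_card_UNIV_eq_self:
  fixes x :: "'a::{field,finite}"
  shows "x ^ card (UNIV :: 'a set) = x"
proof (cases "x = 0")
  case False
  let ?U = "UNIV - {0 :: 'a}"
  \<comment> \<open>Multiplication by \<open>x\<close> permutes the nonzero elements, so \<open>x ^ |U| * \<Prod>U = \<Prod>U\<close>.\<close>
  have "(\<Prod>y\<in>?U. x * y) = \<Prod>?U"
    using False by (intro prod.reindex_bij_witness[of _ "\<lambda>y. y / x" "\<lambda>y. x * y"]) auto
  then have "x ^ card ?U * \<Prod>?U = 1 * \<Prod>?U"
    by (simp add: prod.distrib)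
  then have "x ^ card ?U = 1"
    by (subst (asm) mult_cancel_right) auto
  moreover have "card (UNIV :: 'a set) = Suc (card ?U)"
    by (simp add: card_Diff_singleton Suc_diff_1 finite_UNIV_card_ge_0)
  ultimately show ?thesis
    by (metis power_Suc mult_1_right)
qed (simp add: finite_UNIV_card_ge_0)

abbreviation GL :: "nat \<Rightarrow> 'a::semiring_1 mat set" where
  "GL n \<equiv> Units (ring_mat TYPE('a) n ())"

lemma GL_iff:
  "P \<in> GL n \<longleftrightarrow> P \<in> carrier_mat n n \<and> (\<exists>Q\<in>carrier_mat n n. Q * P = 1\<^sub>m n \<and> P * Q = 1\<^sub>m n)"
  unfolding Units_def by (simp add: ring_mat_simps)

lemma GL_carrier: "P \<in> GL n \<Longrightarrow> P \<in> carrier_mat n n"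
  unfolding GL_iff by blast

lemma GL_one: "1\<^sub>m n \<in> GL n"
  unfolding GL_iff by (auto intro!: bexI[of _ "1\<^sub>m n"])

lemma GL_mult: "P \<in> GL n \<Longrightarrow> R \<in> GL n \<Longrightarrow> P * R \<in> GL n"
proof -
  interpret semiring "ring_mat TYPE('a::semiring_1) n ()"
    by (rule semiring_mat)
  show "P \<in> GL n \<Longrightarrow> R \<in> GL n \<Longrightarrow> P * R \<in> GL n"
    using Units_m_closed by (simp add: ring_mat_simps)
qed

lemma mat_trace_diff:
  assumes "A \<in> carrier_mat n n" "B \<in> carrier_mat n n"
  shows "mat_trace (A - B) = mat_trace A - mat_trace B"
  unfolding mat_trace_def using assms by (simp add: sum_subtractf)

lemma mat_trace_mult_eq_sum:
  assumes "A \<in> carrier_mat k m" "B \<in> carrier_mat m k"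
  shows "mat_trace (A * B) = (\<Sum>i<k. \<Sum>l<m. A $$ (i, l) * B $$ (l, i))"
  unfolding mat_trace_def using assms by (auto simp: scalar_prod_def atLeast0LessThan intro!: sum.cong)

lemma mat_trace_mult_comm:
  assumes "A \<in> carrier_mat k m" "B \<in> carrier_mat m k"
  shows "mat_trace (A * B) = mat_trace (B * A)"
  unfolding mat_trace_mult_eq_sum[OF assms] mat_trace_mult_eq_sum[OF assms(2,1)]
  by (subst sum.swap) (simp add: mult.commute)

lemma finite_carrier_mat: "finite (carrier_mat n m :: 'a::finite mat set)"
proof -
  have "carrier_mat n m \<subseteq> (\<lambda>f. mat n m f) ` (\<Pi>\<^sub>E ij\<in>{..<n} \<times> {..<m}. (UNIV :: 'a set))"
  proof
    fix A :: "'a mat"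
    assume "A \<in> carrier_mat n m"
    then have "A = mat n m (restrict (\<lambda>ij. A $$ ij) ({..<n} \<times> {..<m}))"
      by (intro eq_matI) auto
    then show "A \<in> (\<lambda>f. mat n m f) ` (\<Pi>\<^sub>E ij\<in>{..<n} \<times> {..<m}. (UNIV :: 'a set))"
      by (intro image_eqI[where x = "restrict (\<lambda>ij. A $$ ij) ({..<n} \<times> {..<m})"]) auto
  qed
  then show ?thesis
    by (rule finite_subset) (intro finite_imageI finite_PiE; simp)
qed

lemma mat_rank_le: "A \<in> carrier_mat n nc \<Longrightarrow> mat_rank n A \<le> nc"
  unfolding mat_rank_def by (rule vec_space.rank_le_nc)

lemma mat_rank_mult_GL_right:
  fixes A :: "'a::field mat"
  assumes A: "A \<in> carrier_mat n nc" and Q: "Q \<in> GL nc"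
  shows "mat_rank n (A * Q) = mat_rank n A"
proof -
  obtain Q' where Q': "Q \<in> carrier_mat nc nc" "Q' \<in> carrier_mat nc nc" "Q * Q' = 1\<^sub>m nc"
    using Q unfolding GL_iff by blast
  have AQ: "A * Q \<in> carrier_mat n nc"
    using A Q' by auto
  \<comment> \<open>\<open>Q\<close> permutes \<open>carrier_vec nc\<close>, so \<open>A * Q\<close> and \<open>A\<close> have the same column space.\<close>
  have "(\<exists>x\<in>carrier_vec nc. (A * Q) *\<^sub>v x = y) \<longleftrightarrow> (\<exists>x\<in>carrier_vec nc. A *\<^sub>v x = y)" for y
  proof
    assume "\<exists>x\<in>carrier_vec nc. (A * Q) *\<^sub>v x = y"
    then show "\<exists>x\<in>carrier_vec nc. A *\<^sub>v x = y"
      using A Q' by (metis assoc_mult_mat_vec mult_mat_vec_carrier)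
  next
    assume "\<exists>x\<in>carrier_vec nc. A *\<^sub>v x = y"
    then obtain x where x: "x \<in> carrier_vec nc" "A *\<^sub>v x = y"
      by blast
    have "Q *\<^sub>v (Q' *\<^sub>v x) = (Q * Q') *\<^sub>v x"
      using Q' x by (intro assoc_mult_mat_vec[symmetric]) auto
    then have "(A * Q) *\<^sub>v (Q' *\<^sub>v x) = A *\<^sub>v x"
      using A Q' x by (simp add: assoc_mult_mat_vec)
    then show "\<exists>x\<in>carrier_vec nc. (A * Q) *\<^sub>v x = y"
      using Q' x by (intro bexI[of _ "Q' *\<^sub>v x"]) auto
  qed
  then have "vec_space.col_space n (A * Q) = vec_space.col_space n A"
    using vec_space.col_space_eq[OF AQ] vec_space.col_space_eq[OF A] carrier_matD[OF Q'(1)] A AQ by simp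
  then show ?thesis
    unfolding mat_rank_def vec_space.rank_def vec_space.col_space_def by simp
qed

lemma mat_rank_mult_GL_left:
  fixes A :: "'a::field mat"
  assumes A: "A \<in> carrier_mat n nc" and P: "P \<in> GL n"
  shows "mat_rank n (P * A) = mat_rank n A"
proof -
  interpret vs: vec_space "TYPE('a)" n .
  obtain P' where P': "P \<in> carrier_mat n n" "P' \<in> carrier_mat n n" "P' * P = 1\<^sub>m n"
    using P unfolding GL_iff by blast
  let ?V = "vs.span (set (cols A))" and ?W = "vs.span (set (cols (P * A)))"
  have PA: "P * A \<in> carrier_mat n nc"
    using A P' by auto
  have V: "?V = {y \<in> carrier_vec n. \<exists>x\<in>carrier_vec nc. A *\<^sub>v x = y}"
    using vs.col_space_eq[OF A] A unfolding vs.col_space_def by simp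
  have W: "?W = {y \<in> carrier_vec n. \<exists>x\<in>carrier_vec nc. (P * A) *\<^sub>v x = y}"
    using vs.col_space_eq[OF PA] carrier_matD[OF A] carrier_matD[OF P'(1)] unfolding vs.col_space_def by simp
  \<comment> \<open>Multiplication by \<open>P\<close> maps the column space of \<open>A\<close> isomorphically onto that of \<open>P * A\<close>.\<close>
  have surj: "(\<lambda>v. P *\<^sub>v v) ` ?V = ?W"
    unfolding V W using A P' by (auto simp: assoc_mult_mat_vec)
  have inj: "inj_on (\<lambda>v. P *\<^sub>v v) ?V"
  proof (rule inj_onI)
    fix x y
    assume "x \<in> ?V" "y \<in> ?V" "P *\<^sub>v x = P *\<^sub>v y"
    then have "(P' * P) *\<^sub>v x = (P' * P) *\<^sub>v y"
      using P' V by (metis (no_types, lifting) assoc_mult_mat_vec mem_Collect_eq)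
    then show "x = y"
      using P' \<open>x \<in> ?V\<close> \<open>y \<in> ?V\<close> V by auto
  qed
  have cols: "set (cols A) \<subseteq> carrier_vec n" "set (cols (P * A)) \<subseteq> carrier_vec n"
    using cols_dim[of A] cols_dim[of "P * A"] carrier_matD(1)[OF A] carrier_matD(1)[OF PA] by simp_all
  have subspaces: "vectorspace class_ring (vs.vs ?V)" "vectorspace class_ring (vs.vs ?W)"
    by (rule vs.subspace_is_vs[OF vs.span_is_subspace[OF cols(1)]],
        rule vs.subspace_is_vs[OF vs.span_is_subspace[OF cols(2)]])
  have "linear_map class_ring (vs.vs ?V) (vs.vs ?W) (\<lambda>v. P *\<^sub>v v)"
    unfolding linear_map_def mod_hom_def mod_hom_axioms_def
  proof (intro conjI)
    show "Module.module class_ring (vs.vs ?V)" "Module.module class_ring (vs.vs ?W)"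
      using subspaces vectorspace_def by blast+
    show "(\<lambda>v. P *\<^sub>v v) \<in> LinearCombinations.module_hom class_ring (vs.vs ?V) (vs.vs ?W)"
      unfolding LinearCombinations.module_hom_def
      using surj P' V by (auto simp: mult_add_distrib_mat_vec mult_mat_vec)
  qed (rule subspaces)+
  then have "vectorspace.dim class_ring (vs.vs ?V) = vectorspace.dim class_ring (vs.vs ?W)"
    using linear_map.dim_eq vs.fin_dim_span_cols[OF A] inj surj by fastforce
  then show ?thesis
    unfolding mat_rank_def vs.rank_def by simp
qed

lemma sum_diff_closed_eq:
  fixes C :: "'a::ab_group_add mat set"
  assumes "C \<subseteq> carrier_mat n m" and add: "\<And>X Y. X \<in> C \<Longrightarrow> Y \<in> C \<Longrightarrow> X + Y \<in> C"
    and diff: "\<And>X Y. X \<in> C \<Longrightarrow> Y \<in> C \<Longrightarrow> X - Y \<in> C" and "Y \<in> C"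
  shows "(\<Sum>X\<in>C. f (X - Y)) = (\<Sum>X\<in>C. f X)"
proof (rule sum.reindex_bij_witness[where i = "\<lambda>X. X + Y" and j = "\<lambda>X. X - Y"])
  fix X
  assume "X \<in> C"
  then have "X \<in> carrier_mat n m" "Y \<in> carrier_mat n m"
    using assms(1,4) by auto
  then show "X - Y + Y = X" "X + Y - Y = X"
    by (auto intro!: eq_matI)
  show "X - Y \<in> C" "X + Y \<in> C"
    using \<open>X \<in> C\<close> \<open>Y \<in> C\<close> by (auto intro: add diff)
qed simp

definition partial_one_mat :: "nat \<Rightarrow> nat \<Rightarrow> 'a::zero_neq_one mat" where
  "partial_one_mat n m = mat n n (\<lambda>(i, j). if i = j \<and> i < m then 1 else 0)"

lemma partial_one_mat_carrier [simp]: "partial_one_mat n m \<in> carrier_mat n n"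
  unfolding partial_one_mat_def by auto

lemma index_partial_one_mat [simp]:
  "i < n \<Longrightarrow> j < n \<Longrightarrow> partial_one_mat n m $$ (i, j) = (if i = j \<and> i < m then 1 else 0)"
  "dim_row (partial_one_mat n m) = n" "dim_col (partial_one_mat n m) = n"
  unfolding partial_one_mat_def by auto

lemma mat_rank_partial_one_mat:
  assumes "m \<le> n"
  shows "mat_rank n (partial_one_mat n m :: 'a::field mat) = m"
proof -
  interpret vs: vec_space "TYPE('a)" n .
  let ?D = "partial_one_mat n m :: 'a mat"
  define S where "S = (unit_vec n ` {..<m} :: 'a vec set)"
  have col: "col ?D j = (if j < m then unit_vec n j else 0\<^sub>v n)" if "j < n" for j
    using that by (intro eq_vecI) auto
  have cols: "set (cols ?D) = col ?D ` {..<n}"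
    by (auto simp: cols_def)
  have S_cols: "S \<subseteq> set (cols ?D)"
    unfolding S_def cols using assms col by (auto intro!: image_eqI)
  have cols_S: "set (cols ?D) \<subseteq> insert (0\<^sub>v n) S"
    unfolding S_def cols using col by auto
  have "vs.lin_indpt S"
    using vs.unit_vecs_basis assms vs.subset_li_is_li
    unfolding vs.basis_def S_def unit_vecs_def by (metis image_mono lessThan_subset_iff set_map set_upt atLeast0LessThan)
  \<comment> \<open>Every independent set of columns omits the zero column, so \<open>S\<close> is a maximal one.\<close>
  then have "maximal S (\<lambda>T. T \<subseteq> set (cols ?D) \<and> vs.lin_indpt T)"
    unfolding maximal_def
  proof (intro conjI allI impI S_cols)
    fix T
    assume T: "S \<subseteq> T \<and> T \<subseteq> set (cols ?D) \<and> vs.lin_indpt T"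
    then have "T \<subseteq> carrier_vec n"
      using cols_dim[of ?D] by auto
    then have "0\<^sub>v n \<notin> T"
      using vs.vs_zero_lin_dep T by auto
    then show "T = S"
      using T cols_S by auto
  qed
  then have "mat_rank n ?D = card S"
    unfolding mat_rank_def by (rule vs.rank_card_indpt[OF partial_one_mat_carrier])
  also have "card S = m"
    unfolding S_def using assms by (subst card_image) (auto intro!: inj_onI simp: unit_vec_eq)
  finally show ?thesis .
qed

definition leading_identity :: "nat \<Rightarrow> nat \<Rightarrow> 'a::{zero,one} mat \<Rightarrow> bool" where
  "leading_identity n k B \<longleftrightarrow>
     (\<forall>i<n. \<forall>j<n. i < k \<or> j < k \<longrightarrow> B $$ (i, j) = (if i = j then 1 else 0))"

lemma leading_identityD:
  "leading_identity n k B \<Longrightarrow> i < n \<Longrightarrow> j < n \<Longrightarrow> i < k \<or> j < k \<Longrightarrow> B $$ (i, j) = (if i = j then 1 else 0)"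
  unfolding leading_identity_def by blast

lemma leading_identity_0: "leading_identity n 0 B"
  unfolding leading_identity_def by simp

lemma leading_identity_swap:
  assumes "leading_identity n k B" "B \<in> carrier_mat n n" "k \<le> i" "k \<le> l" "i < n" "l < n"
  shows "leading_identity n k (swapcols i l (swaprows i l B))"
  unfolding leading_identity_def
proof (intro allI impI)
  fix x y
  assume xy: "x < n" "y < n" "x < k \<or> y < k"
  define \<tau> where "\<tau> z = (if z = i then l else if z = l then i else z)" for z
  have "swapcols i l (swaprows i l B) $$ (x, y) = B $$ (\<tau> x, \<tau> y)"
    using assms(2,5,6) xy(1,2) by (simp add: \<tau>_def)
  moreover have "\<tau> x < n" "\<tau> y < n" "\<tau> x < k \<or> \<tau> y < k" "\<tau> x = \<tau> y \<longleftrightarrow> x = y"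
    using assms(3-6) xy unfolding \<tau>_def by auto
  ultimately show "swapcols i l (swaprows i l B) $$ (x, y) = (if x = y then 1 else 0)"
    using leading_identityD[OF assms(1)] by simp
qed

lemma leading_identity_addcol_addrow:
  assumes "leading_identity n k B" "B \<in> carrier_mat n n" "k \<le> l" "k \<le> m" "l < n" "m < n"
  shows "leading_identity n k (addcol a l m (addrow b l m B))"
  unfolding leading_identity_def
proof (intro allI impI)
  fix x y
  assume xy: "x < n" "y < n" "x < k \<or> y < k"
  note B = leading_identityD[OF assms(1)]
  have entry: "addcol a l m (addrow b l m B) $$ (x, y) =
      (if y = l then a * B $$ (x, m) + B $$ (x, l) else if x = l then b * B $$ (m, y) + B $$ (l, y) else B $$ (x, y))"
    using assms(2-6) xy by auto
  show "addcol a l m (addrow b l m B) $$ (x, y) = (if x = y then 1 else 0)"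
  proof (cases "y = l \<or> x = l")
    case True
    then show ?thesis
      unfolding entry using assms(3-6) xy B[of x m] B[of x l] B[of m y] B[of l y] by auto
  qed (use entry B[OF xy] in simp)
qed

section \<open>The field with \<open>q\<^sup>2\<close> elements and its conjugation\<close>

locale field_q2 =
  fixes q :: nat and field_type :: "'a::{field,finite} itself"
  assumes card_UNIV: "card (UNIV :: 'a set) = q\<^sup>2"
    and q_CHAR_power: "\<exists>k. q = CHAR('a) ^ k"
begin

abbreviation bar :: "'a \<Rightarrow> 'a" where
  "bar \<equiv> conj_q q"

lemma two_le_q: "2 \<le> q"
proof -
  have "card {0, 1 :: 'a} \<le> card (UNIV :: 'a set)"
    by (rule card_mono) auto
  then have "2 \<le> q\<^sup>2"
    by (simp add: card_UNIV)
  moreover have "q\<^sup>2 \<le> 1" if "q \<le> 1"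
    using that power_mono[of q 1 2] by simp
  ultimately show ?thesis
    by linarith
qed

lemma frobenius_add: "(x + y :: 'a) ^ q = x ^ q + y ^ q"
proof -
  obtain k where "q = CHAR('a) ^ k"
    using q_CHAR_power by blast
  moreover have "prime CHAR('a)"
    by (intro prime_CHAR_semidom finite_imp_CHAR_pos) simp
  ultimately show ?thesis
    by (intro freshmans_dream')
qed

lemma bar_add [simp]: "bar (x + y) = bar x + bar y"
  unfolding conj_q_def by (rule frobenius_add)

lemma bar_mult [simp]: "bar (x * y) = bar x * bar y"
  unfolding conj_q_def by (simp add: power_mult_distrib)

lemma bar_0 [simp]: "bar 0 = 0"
  using two_le_q unfolding conj_q_def by simp

lemma bar_1 [simp]: "bar 1 = 1"
  unfolding conj_q_def by simp

lemma bar_bar [simp]: "bar (bar x) = x"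
  unfolding conj_q_def
  by (simp flip: power_mult power2_eq_square card_UNIV add: power_card_UNIV_eq_self)

lemma bar_minus [simp]: "bar (- x) = - bar x"
proof -
  have "bar x + bar (- x) = bar (x + - x)"
    by (rule bar_add[symmetric])
  also have "\<dots> = 0"
    by simp
  finally show ?thesis
    by (rule minus_unique[symmetric])
qed

lemma bar_diff [simp]: "bar (x - y) = bar x - bar y"
  using bar_add[of x "- y"] by simp

lemma bar_sum [simp]: "bar (sum f A) = (\<Sum>i\<in>A. bar (f i))"
  by (induction A rule: infinite_finite_induct) auto

lemma bar_eq_0_iff [simp]: "bar x = 0 \<longleftrightarrow> x = 0"
  by (metis bar_0 bar_bar)

lemma bar_divide [simp]: "bar (x / y) = bar x / bar y"
  unfolding conj_q_def by (simp add: power_divide)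

lemma bar_if: "bar (if P then x else y) = (if P then bar x else bar y)"
  by simp

lemma Fq_iff: "x \<in> Fq q \<longleftrightarrow> bar x = x"
  unfolding Fq_def conj_q_def by simp

lemma card_Fq_le: "card (Fq q :: 'a set) \<le> q"
proof (rule card_le_degree_if_roots)
  let ?p = "Polynomial.monom 1 q - [:0, 1:] :: 'a poly"
  have "Polynomial.coeff ?p q = 1"
    using two_le_q by (simp add: coeff_pCons split: nat.splits)
  then show "?p \<noteq> 0"
    by (metis coeff_0 zero_neq_one)
  show "degree ?p \<le> q"
    using two_le_q by (intro degree_diff_le) (auto simp: degree_monom_le)
  show "poly ?p x = 0" if "x \<in> Fq q" for x
    using that by (simp add: Fq_def poly_monom)
qed

text \<open>Trace and norm are onto because their nonempty fibres are cosets of the roots of \<open>X\<^sup>q + X\<close>,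
  resp. \<open>X\<^sup>q\<^sup>+\<^sup>1 - 1\<close>, and so have at most \<open>q\<close>, resp. \<open>q + 1\<close>, elements.\<close>

lemma range_trace: "range (\<lambda>y. y + bar y) = Fq q"
proof (rule image_eq_if_card_fibres_le[where k = q])
  define K where "K = {z :: 'a. z + bar z = 0}"
  have "card K \<le> q"
  proof (rule card_le_degree_if_roots)
    let ?p = "Polynomial.monom 1 q + [:0, 1:] :: 'a poly"
    have "Polynomial.coeff ?p q = 1"
      using two_le_q by (simp add: coeff_pCons split: nat.splits)
    then show "?p \<noteq> 0"
      by (metis coeff_0 zero_neq_one)
    show "degree ?p \<le> q"
      using two_le_q by (intro degree_add_le) (auto simp: degree_monom_le)
    show "poly ?p x = 0" if "x \<in> K" for x
      using that by (simp add: K_def poly_monom conj_q_def add.commute)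
  qed
  moreover have "card {a \<in> UNIV. a + bar a = b} \<le> card K" for b
  proof (rule card_fibre_le_if_translates[where g = "(+)"])
    fix a0 a :: 'a
    assume "a0 + bar a0 = a + bar a"
    then have "a - a0 \<in> K"
      by (simp add: K_def algebra_simps)
    then show "a \<in> (+) a0 ` K"
      by (intro image_eqI[of _ _ "a - a0"]) auto
  qed simp
  ultimately show "card {a \<in> UNIV. a + bar a = b} \<le> q" for b
    by (meson le_trans)
  show "q * card (Fq q :: 'a set) \<le> card (UNIV :: 'a set)"
    using card_Fq_le by (simp add: card_UNIV power2_eq_square)
qed (use two_le_q in \<open>auto simp: Fq_iff add.commute\<close>)

lemma image_norm: "(\<lambda>y. bar y * y) ` (UNIV - {0}) = Fq q - {0}"
proof (rule image_eq_if_card_fibres_le[where k = "q + 1"])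
  define K where "K = {z :: 'a. z ^ (q + 1) = 1}"
  have "card K \<le> q + 1"
  proof (rule card_le_degree_if_roots)
    let ?p = "Polynomial.monom 1 (q + 1) - 1 :: 'a poly"
    have "Polynomial.coeff ?p (q + 1) = 1"
      by simp
    then show "?p \<noteq> 0"
      by (metis coeff_0 zero_neq_one)
    show "degree ?p \<le> q + 1"
      by (intro degree_diff_le) (auto simp: degree_monom_le)
    show "poly ?p x = 0" if "x \<in> K" for x
      using that by (simp add: K_def poly_monom)
  qed
  moreover have "card {a \<in> UNIV - {0}. bar a * a = b} \<le> card K" for b
  proof (rule card_fibre_le_if_translates[where g = "(*)"])
    fix a0 a :: 'a
    assume "a0 \<in> UNIV - {0}" "a \<in> UNIV - {0}" "bar a0 * a0 = bar a * a"
    then have "(a / a0) ^ (q + 1) = 1"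
      by (simp add: conj_q_def power_divide mult.commute)
    then show "a \<in> (*) a0 ` K"
      using \<open>a0 \<in> UNIV - {0}\<close> by (intro image_eqI[of _ _ "a / a0"]) (auto simp: K_def)
  qed simp
  ultimately show "card {a \<in> UNIV - {0}. bar a * a = b} \<le> q + 1" for b
    by (meson le_trans)
  have "card (Fq q - {0} :: 'a set) \<le> q - 1"
    using card_Fq_le by (simp add: Fq_iff)
  then have "(q + 1) * card (Fq q - {0} :: 'a set) \<le> (q + 1) * (q - 1)"
    by (rule mult_le_mono2)
  also have "\<dots> = card (UNIV - {0 :: 'a})"
    using two_le_q by (simp add: card_UNIV card_Diff_singleton power2_eq_square algebra_simps)
  finally show "(q + 1) * card (Fq q - {0} :: 'a set) \<le> card (UNIV - {0 :: 'a})" .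
qed (auto simp: Fq_iff mult.commute)

section \<open>Diagonalising Hermitian matrices by \<open>*\<close>-congruence\<close>

abbreviation ct :: "'a mat \<Rightarrow> 'a mat" where
  "ct \<equiv> conj_transpose q"

lemma dim_ct [simp]: "dim_row (ct A) = dim_col A" "dim_col (ct A) = dim_row A"
  unfolding conj_transpose_def by auto

lemma ct_carrier_iff [simp]: "ct A \<in> carrier_mat m k \<longleftrightarrow> A \<in> carrier_mat k m"
  unfolding carrier_mat_def by auto

lemma index_ct [simp]: "i < dim_col A \<Longrightarrow> j < dim_row A \<Longrightarrow> ct A $$ (i, j) = bar (A $$ (j, i))"
  unfolding conj_transpose_def by auto

lemma ct_ct [simp]: "ct (ct A) = A"
  by (rule eq_matI) auto

lemma ct_mult: "A \<in> carrier_mat k m \<Longrightarrow> B \<in> carrier_mat m l \<Longrightarrow> ct (A * B) = ct B * ct A"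
  by (intro eq_matI) (auto simp: scalar_prod_def mult.commute)

lemma ct_one [simp]: "ct (1\<^sub>m k) = 1\<^sub>m k"
  by (rule eq_matI) auto

lemma ct_swaprows_mat: "ct (swaprows_mat n i k) = swaprows_mat n i k"
  by (rule eq_matI) (auto simp: bar_if)

lemma ct_addrow_mat: "ct (addrow_mat n a k l) = addrow_mat n (bar a) l k"
  by (rule eq_matI) (auto simp: bar_if)

lemma ct_multrow_mat: "ct (multrow_mat n k a) = multrow_mat n k (bar a)"
  by (rule eq_matI) (auto simp: bar_if)

lemma GL_ct: "P \<in> GL n \<Longrightarrow> ct P \<in> GL n"
  unfolding GL_iff by (metis ct_carrier_iff ct_mult ct_one)

lemma herm_carrier: "A \<in> herm q n \<Longrightarrow> A \<in> carrier_mat n n"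
  unfolding herm_def by auto

lemma herm_entry: "A \<in> herm q n \<Longrightarrow> i < n \<Longrightarrow> j < n \<Longrightarrow> bar (A $$ (i, j)) = A $$ (j, i)"
  unfolding herm_def by (metis (mono_tags, lifting) carrier_matD index_ct mem_Collect_eq)

lemma hermI:
  assumes "A \<in> carrier_mat n n" "\<And>i j. i < n \<Longrightarrow> j < n \<Longrightarrow> bar (A $$ (j, i)) = A $$ (i, j)"
  shows "A \<in> herm q n"
  unfolding herm_def using assms by (auto intro!: eq_matI)

lemma herm_add:
  fixes A B :: "'a mat"
  assumes "A \<in> herm q n" "B \<in> herm q n"
  shows "A + B \<in> herm q n"
  using herm_carrier[OF assms(1)] herm_carrier[OF assms(2)] herm_entry[OF assms(1)] herm_entry[OF assms(2)]
  by (intro hermI) auto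

lemma herm_diff:
  fixes A B :: "'a mat"
  assumes "A \<in> herm q n" "B \<in> herm q n"
  shows "A - B \<in> herm q n"
  using herm_carrier[OF assms(1)] herm_carrier[OF assms(2)] herm_entry[OF assms(1)] herm_entry[OF assms(2)]
  by (intro hermI) auto

lemma herm_star_congruence:
  assumes "B \<in> herm q n" "P \<in> carrier_mat n n"
  shows "ct P * B * P \<in> herm q n"
proof -
  have B: "B \<in> carrier_mat n n" "ct B = B"
    using assms(1) unfolding herm_def by auto
  have "ct (ct P * B * P) = ct P * ct (ct P * B)"
    using assms(2) B by (intro ct_mult) auto
  also have "\<dots> = ct P * B * P"
    using assms(2) B by (simp add: ct_mult assoc_mult_mat[of _ n n _ n _ n])
  finally show ?thesis
    unfolding herm_def using assms(2) B by auto
qed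

lemma mat_trace_mult_herm_in_Fq:
  fixes A B :: "'a mat"
  assumes "A \<in> herm q n" "B \<in> herm q n"
  shows "mat_trace (A * B) \<in> Fq q"
proof -
  note trace = mat_trace_mult_eq_sum[OF herm_carrier[OF assms(1)] herm_carrier[OF assms(2)]]
  have "bar (mat_trace (A * B)) = (\<Sum>i<n. \<Sum>l<n. A $$ (l, i) * B $$ (i, l))"
    unfolding trace using assms by (simp add: herm_entry)
  also have "\<dots> = mat_trace (A * B)"
    unfolding trace by (rule sum.swap)
  finally show ?thesis
    by (simp add: Fq_iff)
qed

lemma pairing_herm: "A \<in> herm q n \<Longrightarrow> pairing q \<chi> A B = \<chi> (mat_trace (A * B))"
  unfolding pairing_def herm_def by auto

definition star_congruent :: "nat \<Rightarrow> 'a mat \<Rightarrow> 'a mat \<Rightarrow> bool" where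
  "star_congruent n B B' \<longleftrightarrow> (\<exists>P\<in>GL n. ct P * B * P = B')"

lemma star_congruent_refl: "B \<in> carrier_mat n n \<Longrightarrow> star_congruent n B B"
  unfolding star_congruent_def using GL_one by (intro bexI[of _ "1\<^sub>m n"]) auto

lemma star_congruent_trans:
  assumes "B \<in> carrier_mat n n" "star_congruent n B B'" "star_congruent n B' B''"
  shows "star_congruent n B B''"
proof -
  obtain P R where PR: "P \<in> GL n" "R \<in> GL n" and "ct P * B * P = B'" "ct R * B' * R = B''"
    using assms(2,3) unfolding star_congruent_def by blast
  have "ct (P * R) * B * (P * R) = ct R * (ct P * B * P) * R"
    using assms(1) GL_carrier[OF PR(1)] GL_carrier[OF PR(2)]
    by (simp add: ct_mult[of P n n R n] assoc_mult_mat[of _ n n _ n _ n])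
  also have "\<dots> = B''"
    by (simp add: \<open>ct P * B * P = B'\<close> \<open>ct R * B' * R = B''\<close>)
  finally show ?thesis
    unfolding star_congruent_def using GL_mult[OF PR] by (rule bexI)
qed

lemma star_congruent_herm: "B \<in> herm q n \<Longrightarrow> star_congruent n B B' \<Longrightarrow> B' \<in> herm q n"
  unfolding star_congruent_def using herm_star_congruence GL_carrier by blast

lemma mat_rank_star_congruence:
  assumes "B \<in> carrier_mat n n" "P \<in> GL n"
  shows "mat_rank n (ct P * B * P) = mat_rank n B"
proof -
  have "ct P * B \<in> carrier_mat n n"
    using assms(1) GL_carrier[OF assms(2)] by (intro mult_carrier_mat) auto
  then have "mat_rank n (ct P * B * P) = mat_rank n (ct P * B)"
    using assms(2) by (rule mat_rank_mult_GL_right)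
  also have "\<dots> = mat_rank n B"
    using assms(1) GL_ct[OF assms(2)] by (rule mat_rank_mult_GL_left)
  finally show ?thesis .
qed

lemma star_congruent_swap:
  assumes "B \<in> carrier_mat n n" "i < n" "k < n"
  shows "star_congruent n B (swapcols i k (swaprows i k B))"
proof -
  have "ct (swaprows_mat n i k) * B = swaprows i k B"
    using assms by (simp add: ct_swaprows_mat swaprows_mat)
  then have "ct (swaprows_mat n i k) * B * swaprows_mat n i k = swaprows i k B * swaprows_mat n i k"
    by simp
  also have "\<dots> = swapcols i k (swaprows i k B)"
    using assms by (intro swapcols_mat[symmetric]) auto
  finally show ?thesis
    unfolding star_congruent_def using swaprows_mat_Unit[where b = "()", OF assms(2,3)] by (rule bexI)
qed

lemma star_congruent_add:
  assumes "B \<in> carrier_mat n n" "k < n" "l < n" "k \<noteq> l"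
  shows "star_congruent n B (addcol a l k (addrow (bar a) l k B))"
proof -
  have "ct (addrow_mat n a k l) * B = addrow (bar a) l k B"
    using assms by (simp add: ct_addrow_mat addrow_mat)
  then have "ct (addrow_mat n a k l) * B * addrow_mat n a k l = addrow (bar a) l k B * addrow_mat n a k l"
    by simp
  also have "\<dots> = addcol a l k (addrow (bar a) l k B)"
    using assms by (intro addcol_mat[symmetric]) auto
  finally show ?thesis
    unfolding star_congruent_def using addrow_mat_Unit[where b = "()", OF assms(2-4)] by (rule bexI)
qed

lemma star_congruent_mult:
  assumes "B \<in> carrier_mat n n" "k < n" "a \<noteq> 0"
  shows "star_congruent n B (multcol k a (multrow k (bar a) B))"
proof -
  have "ct (multrow_mat n k a) * B = multrow k (bar a) B"
    using assms by (simp add: ct_multrow_mat multrow_mat)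
  then have "ct (multrow_mat n k a) * B * multrow_mat n k a = multrow k (bar a) B * multrow_mat n k a"
    by simp
  also have "\<dots> = multcol k a (multrow k (bar a) B)"
    using assms by (intro multcol_mat[symmetric]) auto
  finally show ?thesis
    unfolding star_congruent_def using multrow_mat_Unit[where b = "()", OF assms(2,3)] by (rule bexI)
qed

lemma star_congruent_carrier: "star_congruent n B B' \<Longrightarrow> B' \<in> carrier_mat n n"
  unfolding star_congruent_def by (auto dest!: GL_carrier)

lemma star_congruent_nonzero_diagonal_entry:
  assumes B: "B \<in> herm q n" and lead: "leading_identity n k B"
    and ij: "k \<le> i" "i < n" "k \<le> j" "j < n" and nz: "B $$ (i, j) \<noteq> 0"
  shows "\<exists>B' l. star_congruent n B B' \<and> leading_identity n k B' \<and> k \<le> l \<and> l < n \<and> B' $$ (l, l) \<noteq> 0"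
proof (cases "B $$ (i, i) = 0 \<and> B $$ (j, j) = 0")
  case False
  then show ?thesis
    using star_congruent_refl[OF herm_carrier[OF B]] lead ij by blast
next
  case True
  then have "i \<noteq> j"
    using nz by auto
  have "1 \<in> range (\<lambda>y. y + bar y)"
    by (simp add: range_trace Fq_iff)
  then obtain y where y: "y + bar y = 1"
    by (metis rangeE)
  define \<mu> where "\<mu> = y / B $$ (i, j)"
  define B' where "B' = addcol \<mu> i j (addrow (bar \<mu>) i j B)"
  \<comment> \<open>As \<open>B\<close> vanishes at \<open>(i, i)\<close> and \<open>(j, j)\<close>, the new entry at \<open>(i, i)\<close> is the trace of \<open>y\<close>.\<close>
  have "B' $$ (i, i) = \<mu> * B $$ (i, j) + bar \<mu> * B $$ (j, i)"
    using True herm_carrier[OF B] ij \<open>i \<noteq> j\<close> by (simp add: B'_def)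
  also have "\<dots> = y + bar y"
    using nz by (simp add: \<mu>_def flip: herm_entry[OF B ij(2,4)])
  finally have "B' $$ (i, i) \<noteq> 0"
    using y by simp
  moreover have "star_congruent n B B'"
    unfolding B'_def using herm_carrier[OF B] ij \<open>i \<noteq> j\<close> by (intro star_congruent_add) auto
  moreover have "leading_identity n k B'"
    unfolding B'_def using lead herm_carrier[OF B] ij(1,3,2,4) by (rule leading_identity_addcol_addrow)
  ultimately show ?thesis
    using ij by blast
qed

lemma star_congruent_pivot:
  assumes B: "B \<in> herm q n" and lead: "leading_identity n k B"
    and ij: "k \<le> i" "i < n" "k \<le> j" "j < n" and nz: "B $$ (i, j) \<noteq> 0"
  shows "\<exists>B'. star_congruent n B B' \<and> leading_identity n k B' \<and> B' $$ (k, k) \<noteq> 0"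
proof -
  obtain B1 l where B1: "star_congruent n B B1" "leading_identity n k B1" "k \<le> l" "l < n"
    "B1 $$ (l, l) \<noteq> 0"
    using star_congruent_nonzero_diagonal_entry[OF assms] by blast
  have B1c: "B1 \<in> carrier_mat n n"
    using B1(1) by (rule star_congruent_carrier)
  let ?B2 = "swapcols l k (swaprows l k B1)"
  have "star_congruent n B ?B2"
    using star_congruent_trans[OF herm_carrier[OF B] B1(1) star_congruent_swap[OF B1c B1(4)]] B1(3,4)
    by simp
  moreover have "leading_identity n k ?B2"
    using leading_identity_swap[OF B1(2) B1c B1(3) le_refl B1(4)] B1(3,4) by simp
  moreover have "?B2 $$ (k, k) = B1 $$ (l, l)"
    using B1c B1(3,4) by auto
  ultimately show ?thesis
    using B1(5) by metis
qed

lemma star_congruent_clear_entry: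
  assumes B: "B \<in> carrier_mat n n" and lead: "leading_identity n k B"
    and kt: "k < t" "t < n" and nz: "B $$ (k, k) \<noteq> 0"
  shows "\<exists>B'. star_congruent n B B' \<and> leading_identity n k B' \<and> B' $$ (k, t) = 0 \<and>
    (\<forall>j<n. j \<noteq> t \<longrightarrow> B' $$ (k, j) = B $$ (k, j))"
proof -
  define \<mu> where "\<mu> = - B $$ (k, t) / B $$ (k, k)"
  define B' where "B' = addcol \<mu> t k (addrow (bar \<mu>) t k B)"
  have "star_congruent n B B'"
    unfolding B'_def using B kt by (intro star_congruent_add) auto
  moreover have "leading_identity n k B'"
    unfolding B'_def using lead B kt by (intro leading_identity_addcol_addrow) auto
  moreover have "B' $$ (k, t) = 0"
    unfolding B'_def \<mu>_def using B kt nz by simp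
  moreover have "\<forall>j<n. j \<noteq> t \<longrightarrow> B' $$ (k, j) = B $$ (k, j)"
    unfolding B'_def using B kt by simp
  ultimately show ?thesis
    by blast
qed

lemma star_congruent_clear_row:
  assumes B: "B \<in> carrier_mat n n" and lead: "leading_identity n k B"
    and "k < n" and nz: "B $$ (k, k) \<noteq> 0"
  shows "\<exists>B'. star_congruent n B B' \<and> leading_identity n k B' \<and> B' $$ (k, k) = B $$ (k, k) \<and>
    (\<forall>j. k < j \<and> j < n \<longrightarrow> B' $$ (k, j) = 0)"
proof -
  have "\<exists>B'. star_congruent n B B' \<and> leading_identity n k B' \<and> B' $$ (k, k) = B $$ (k, k) \<and>
    (\<forall>j. k < j \<and> j < t \<longrightarrow> B' $$ (k, j) = 0)" if "t \<le> n" for t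
    using that
  proof (induction t)
    case 0
    then show ?case
      using star_congruent_refl[OF B] lead by blast
  next
    case (Suc t)
    then obtain B1 where B1: "star_congruent n B B1" "leading_identity n k B1" "B1 $$ (k, k) = B $$ (k, k)"
      "\<forall>j. k < j \<and> j < t \<longrightarrow> B1 $$ (k, j) = 0"
      by auto
    show ?case
    proof (cases "k < t")
      case False
      then show ?thesis
        using B1 by auto
    next
      case True
      obtain B2 where B2: "star_congruent n B1 B2" "leading_identity n k B2" "B2 $$ (k, t) = 0"
        "\<forall>j<n. j \<noteq> t \<longrightarrow> B2 $$ (k, j) = B1 $$ (k, j)"
        using star_congruent_clear_entry[OF star_congruent_carrier[OF B1(1)] B1(2) True] Suc.prems nz B1(3)
        by auto
      have "star_congruent n B B2"
        using star_congruent_trans[OF B B1(1) B2(1)] .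
      moreover have "B2 $$ (k, k) = B $$ (k, k)"
        using B2(4) B1(3) True Suc.prems by auto
      moreover have "\<forall>j. k < j \<and> j < Suc t \<longrightarrow> B2 $$ (k, j) = 0"
        using B1(4) B2(3,4) Suc.prems less_Suc_eq by auto
      ultimately show ?thesis
        using B2(2) by blast
    qed
  qed
  then show ?thesis
    by blast
qed

lemma star_congruent_normalize_pivot:
  assumes B: "B \<in> herm q n" and lead: "leading_identity n k B" and k: "k < n"
    and nz: "B $$ (k, k) \<noteq> 0" and row: "\<forall>j. k < j \<and> j < n \<longrightarrow> B $$ (k, j) = 0"
  shows "\<exists>B'. star_congruent n B B' \<and> leading_identity n (Suc k) B'"
proof -
  have Bc: "B \<in> carrier_mat n n"
    using B by (rule herm_carrier)
  have row0: "B $$ (k, j) = 0" if "j < n" "j \<noteq> k" for j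
    using row leading_identityD[OF lead k that(1)] that by (cases "j < k") auto
  have col0: "B $$ (i, k) = 0" if "i < n" "i \<noteq> k" for i
    using row0[OF that] herm_entry[OF B k that(1)] by simp
  have "inverse (B $$ (k, k)) \<in> Fq q - {0}"
    using nz herm_entry[OF B k k] bar_divide[of 1 "B $$ (k, k)"] by (simp add: Fq_iff inverse_eq_divide)
  then have "inverse (B $$ (k, k)) \<in> (\<lambda>y. bar y * y) ` (UNIV - {0})"
    by (simp only: image_norm)
  then obtain c where c: "c \<noteq> 0" "bar c * c = inverse (B $$ (k, k))"
    by force
  define B' where "B' = multcol k c (multrow k (bar c) B)"
  have "star_congruent n B B'"
    unfolding B'_def using Bc k c(1) by (rule star_congruent_mult)
  moreover have "leading_identity n (Suc k) B'"
    unfolding leading_identity_def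
  proof (intro allI impI)
    fix i j
    assume ij: "i < n" "j < n" "i < Suc k \<or> j < Suc k"
    have entry: "B' $$ (i, j) = (if j = k then c else 1) * ((if i = k then bar c else 1) * B $$ (i, j))"
      unfolding B'_def using Bc ij by auto
    have "B' $$ (k, k) = (bar c * c) * B $$ (k, k)"
      unfolding B'_def using Bc k by (simp add: mult_ac)
    then show "B' $$ (i, j) = (if i = j then 1 else 0)"
      using entry ij row0 col0 leading_identityD[OF lead ij(1,2)] c nz
      by (cases "i = k"; cases "j = k") auto
  qed
  ultimately show ?thesis
    by blast
qed

lemma star_congruent_leading_identity_Suc:
  assumes B: "B \<in> herm q n" and lead: "leading_identity n k B"
    and ij: "k \<le> i" "i < n" "k \<le> j" "j < n" "B $$ (i, j) \<noteq> 0"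
  shows "\<exists>B'. star_congruent n B B' \<and> leading_identity n (Suc k) B'"
proof -
  have k: "k < n"
    using ij by simp
  obtain B1 where B1: "star_congruent n B B1" "leading_identity n k B1" "B1 $$ (k, k) \<noteq> 0"
    using star_congruent_pivot[OF B lead ij] by blast
  obtain B2 where B2: "star_congruent n B1 B2" "leading_identity n k B2" "B2 $$ (k, k) \<noteq> 0"
    "\<forall>j. k < j \<and> j < n \<longrightarrow> B2 $$ (k, j) = 0"
    using star_congruent_clear_row[OF star_congruent_carrier[OF B1(1)] B1(2) k B1(3)] B1(3) by auto
  have B2h: "B2 \<in> herm q n"
    using star_congruent_herm[OF star_congruent_herm[OF B B1(1)] B2(1)] .
  then show ?thesis
    using star_congruent_normalize_pivot[OF B2h B2(2) k B2(3,4)]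
      star_congruent_trans[OF herm_carrier[OF B] B1(1) B2(1)] star_congruent_trans[OF herm_carrier[OF B]]
    by blast
qed

lemma leading_identity_eq_partial_one_mat:
  assumes "B \<in> carrier_mat n n" "leading_identity n k B"
    and "\<And>i j. k \<le> i \<Longrightarrow> i < n \<Longrightarrow> k \<le> j \<Longrightarrow> j < n \<Longrightarrow> B $$ (i, j) = 0"
  shows "B = partial_one_mat n k"
proof (rule eq_matI)
  fix i j
  assume "i < dim_row (partial_one_mat n k)" "j < dim_col (partial_one_mat n k)"
  then show "B $$ (i, j) = partial_one_mat n k $$ (i, j)"
    using leading_identityD[OF assms(2)] assms(3) by (cases "i < k \<or> j < k") auto
qed (use assms(1) in auto)

lemma leading_identity_star_congruent_partial_one_mat:
  assumes "B \<in> herm q n" "leading_identity n k B" "k \<le> n"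
  shows "\<exists>m\<le>n. star_congruent n B (partial_one_mat n m)"
  using assms
proof (induction "n - k" arbitrary: k B rule: less_induct)
  case less
  show ?case
  proof (cases "\<exists>i j. k \<le> i \<and> i < n \<and> k \<le> j \<and> j < n \<and> B $$ (i, j) \<noteq> 0")
    case False
    then have "B = partial_one_mat n k"
      using less.prems by (intro leading_identity_eq_partial_one_mat herm_carrier) auto
    then show ?thesis
      using star_congruent_refl[OF herm_carrier[OF less.prems(1)]] less.prems(3) by (intro exI[of _ k]) simp
  next
    case True
    then obtain i j where ij: "k \<le> i" "i < n" "k \<le> j" "j < n" "B $$ (i, j) \<noteq> 0"
      by blast
    then obtain B' where B': "star_congruent n B B'" "leading_identity n (Suc k) B'"
      using star_congruent_leading_identity_Suc[OF less.prems(1,2)] by blast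
    moreover have "n - Suc k < n - k"
      using ij by arith
    ultimately obtain m where "m \<le> n" "star_congruent n B' (partial_one_mat n m)"
      using less.hyps[of "Suc k" B'] star_congruent_herm[OF less.prems(1)] ij by auto
    then show ?thesis
      using star_congruent_trans[OF herm_carrier[OF less.prems(1)] B'(1)] by blast
  qed
qed

theorem herm_star_congruent_partial_one_mat:
  assumes "B \<in> herm q n"
  shows "star_congruent n B (partial_one_mat n (mat_rank n B))"
proof -
  obtain m where m: "m \<le> n" "star_congruent n B (partial_one_mat n m)"
    using leading_identity_star_congruent_partial_one_mat[OF assms leading_identity_0] by blast
  then have "m = mat_rank n B"
    using mat_rank_partial_one_mat mat_rank_star_congruence herm_carrier[OF assms]
    unfolding star_congruent_def by metis
  then show ?thesis
    using m(2) by simp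
qed

lemma finite_herm: "finite (herm q n :: 'a mat set)"
  by (rule finite_subset[OF _ finite_carrier_mat[of n n]]) (auto simp: herm_def)

lemma finite_herm_rank: "finite (herm_rank q n k :: 'a mat set)"
  by (rule finite_subset[OF _ finite_herm[of n]]) (auto simp: herm_rank_def)

lemma herm_rank_star_congruence:
  fixes A :: "'a mat"
  assumes "A \<in> herm_rank q n k" "P \<in> GL n"
  shows "ct P * A * P \<in> herm_rank q n k"
  using assms herm_star_congruence[of A n P] mat_rank_star_congruence[of A n P] GL_carrier[of P n]
    herm_carrier[of A n]
  unfolding herm_rank_def by auto

section \<open>The dual inner distribution of the zero-diagonal code\<close>

definition char_sum_rank_one :: "nat \<Rightarrow> ('a \<Rightarrow> complex) \<Rightarrow> 'a mat \<Rightarrow> complex" where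
  "char_sum_rank_one n \<chi> B = (\<Sum>A\<in>herm_rank q n 1. pairing q \<chi> A B)"

lemma pairing_star_congruence:
  fixes A B P :: "'a mat"
  assumes A: "A \<in> herm q n" and B: "B \<in> carrier_mat n n" and P: "P \<in> carrier_mat n n"
  shows "pairing q \<chi> (P * A * ct P) B = pairing q \<chi> A (ct P * B * P)"
proof -
  have A': "A \<in> carrier_mat n n" "P * A * ct P \<in> herm q n"
    using herm_carrier[OF A] herm_star_congruence[OF A, of "ct P"] P by auto
  have "pairing q \<chi> (P * A * ct P) B = \<chi> (mat_trace (P * (A * ct P * B)))"
    using A' B P by (simp add: pairing_herm assoc_mult_mat[of _ n n _ n _ n])
  also have "\<dots> = \<chi> (mat_trace (A * ct P * B * P))"
    using A' B P by (subst mat_trace_mult_comm[of _ n n]) auto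
  also have "\<dots> = pairing q \<chi> A (ct P * B * P)"
    using A' B P by (simp add: pairing_herm[OF A] assoc_mult_mat[of _ n n _ n _ n])
  finally show ?thesis .
qed

lemma char_sum_rank_one_star_congruence:
  assumes B: "B \<in> herm q n" and P: "P \<in> GL n"
  shows "char_sum_rank_one n \<chi> (ct P * B * P) = char_sum_rank_one n \<chi> B"
proof -
  obtain P' where P': "P \<in> carrier_mat n n" "P' \<in> carrier_mat n n" "P' * P = 1\<^sub>m n" "P * P' = 1\<^sub>m n"
    using P unfolding GL_iff by blast
  then have "P' \<in> GL n"
    unfolding GL_iff by blast
  have [simp]: "ct P * ct P' = 1\<^sub>m n" "ct P' * ct P = 1\<^sub>m n"
    using P' by (metis ct_mult ct_one)+
  have cancel: "R * (R' * A * ct R') * ct R = A"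
    if "R \<in> carrier_mat n n" "R' \<in> carrier_mat n n" "R * R' = 1\<^sub>m n" "ct R' * ct R = 1\<^sub>m n"
      "A \<in> herm_rank q n 1" for R R' A
  proof -
    have "A \<in> carrier_mat n n"
      using that(5) unfolding herm_rank_def by (auto simp: herm_carrier)
    then have "R * (R' * A * ct R') * ct R = (R * R') * A * (ct R' * ct R)"
      using that(1,2) by (simp add: assoc_mult_mat[of _ n n _ n _ n])
    then show ?thesis
      using that \<open>A \<in> carrier_mat n n\<close> by simp
  qed
  \<comment> \<open>\<open>A \<mapsto> P * A * ct P\<close> permutes the rank one Hermitian matrices.\<close>
  show ?thesis
    unfolding char_sum_rank_one_def
  proof (rule sum.reindex_bij_witness[where i = "\<lambda>A. P' * A * ct P'" and j = "\<lambda>A. P * A * ct P"])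
    fix A :: "'a mat"
    assume A: "A \<in> herm_rank q n 1"
    show "P * A * ct P \<in> herm_rank q n 1" "P' * A * ct P' \<in> herm_rank q n 1"
      using herm_rank_star_congruence[OF A GL_ct[OF P]] herm_rank_star_congruence[OF A GL_ct[OF \<open>P' \<in> GL n\<close>]]
      by simp_all
    show "P' * (P * A * ct P) * ct P' = A" "P * (P' * A * ct P') * ct P = A"
      using cancel P' A by simp_all
    show "pairing q \<chi> (P * A * ct P) B = pairing q \<chi> A (ct P * B * P)"
      using A herm_carrier[OF B] P' unfolding herm_rank_def by (intro pairing_star_congruence) auto
  qed
qed

lemma char_sum_rank_one_eq_if_rank_eq:
  assumes "B \<in> herm q n" "B' \<in> herm q n" "mat_rank n B = mat_rank n B'"
  shows "char_sum_rank_one n \<chi> B = char_sum_rank_one n \<chi> B'"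
  using herm_star_congruent_partial_one_mat[OF assms(1)] herm_star_congruent_partial_one_mat[OF assms(2)]
    char_sum_rank_one_star_congruence assms
  unfolding star_congruent_def by metis

lemma Qnum_1_eq_char_sum_rank_one:
  assumes "B \<in> herm_rank q n i"
  shows "Qnum q n \<chi> 1 i = char_sum_rank_one n \<chi> B"
proof -
  have "(SOME B. B \<in> herm_rank q n i) \<in> (herm_rank q n i :: 'a mat set)"
    using assms by (rule someI)
  then show ?thesis
    using assms char_sum_rank_one_eq_if_rank_eq
    unfolding Qnum_def char_sum_rank_one_def herm_rank_def Let_def by auto
qed

lemma zero_diag_herm_herm: "Z \<in> zero_diag_herm q n \<Longrightarrow> Z \<in> herm q n"
  unfolding zero_diag_herm_def by auto

lemma finite_zero_diag_herm: "finite (zero_diag_herm q n :: 'a mat set)"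
  by (rule finite_subset[OF _ finite_herm[of n]]) (auto simp: zero_diag_herm_def)

lemma zero_mat_in_zero_diag_herm: "(0\<^sub>m n n :: 'a mat) \<in> zero_diag_herm q n"
  unfolding zero_diag_herm_def by (auto intro!: hermI)

lemma zero_diag_herm_add:
  fixes X Y :: "'a mat"
  assumes "X \<in> zero_diag_herm q n" "Y \<in> zero_diag_herm q n"
  shows "X + Y \<in> zero_diag_herm q n"
  using assms herm_add[of X n Y] herm_carrier[of Y n] unfolding zero_diag_herm_def by auto

lemma zero_diag_herm_diff:
  fixes X Y :: "'a mat"
  assumes "X \<in> zero_diag_herm q n" "Y \<in> zero_diag_herm q n"
  shows "X - Y \<in> zero_diag_herm q n"
  using assms herm_diff[of X n Y] herm_carrier[of Y n] unfolding zero_diag_herm_def by auto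

lemma sum_zero_diag_herm_diff:
  fixes Y :: "'a mat"
  assumes "Y \<in> zero_diag_herm q n"
  shows "(\<Sum>X\<in>zero_diag_herm q n. f (X - Y)) = (\<Sum>X\<in>zero_diag_herm q n. f X)"
  using assms zero_diag_herm_add zero_diag_herm_diff
  by (intro sum_diff_closed_eq) (auto dest: zero_diag_herm_herm herm_carrier)

lemma add_char_add:
  fixes \<chi> :: "'a \<Rightarrow> complex"
  shows "nontrivial_add_char q \<chi> \<Longrightarrow> x \<in> Fq q \<Longrightarrow> y \<in> Fq q \<Longrightarrow> \<chi> (x + y) = \<chi> x * \<chi> y"
  unfolding nontrivial_add_char_def by blast

lemma add_char_zero:
  fixes \<chi> :: "'a \<Rightarrow> complex"
  assumes "nontrivial_add_char q \<chi>"
  shows "\<chi> 0 = 1"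
proof -
  have "(0 :: 'a) \<in> Fq q"
    by (simp add: Fq_iff)
  then have "\<chi> 0 = \<chi> 0 * \<chi> 0" "\<chi> 0 \<noteq> 0"
    using add_char_add[OF assms, of 0 0] assms unfolding nontrivial_add_char_def by auto
  then show ?thesis
    by simp
qed

lemma exists_zero_diag_herm_trace:
  fixes A :: "'a mat"
  assumes A: "A \<in> herm q n" and ij: "i < n" "j < n" "i \<noteq> j" "A $$ (i, j) \<noteq> 0" and x: "x \<in> Fq q"
  shows "\<exists>Z\<in>zero_diag_herm q n. mat_trace (A * Z) = x"
proof -
  obtain y where y: "y + bar y = x"
    using x range_trace by (metis rangeE)
  define w where "w = y / A $$ (i, j)"
  define Z where
    "Z = mat n n (\<lambda>(a, l). (if a = j \<and> l = i then w else 0) + (if a = i \<and> l = j then bar w else 0))"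
  have Zc: "Z \<in> carrier_mat n n"
    unfolding Z_def by simp
  have Z: "Z $$ (a, l) = (if a = j \<and> l = i then w else 0) + (if a = i \<and> l = j then bar w else 0)"
    if "a < n" "l < n" for a l
    unfolding Z_def using that by simp
  have "Z \<in> zero_diag_herm q n"
    unfolding zero_diag_herm_def using Zc ij by (auto intro!: hermI simp: Z)
  moreover have "mat_trace (A * Z) = A $$ (i, j) * w + A $$ (j, i) * bar w"
  proof -
    have "mat_trace (A * Z) = (\<Sum>a<n. \<Sum>l<n. (if l = j then (if a = i then A $$ (i, j) * w else 0) else 0)
        + (if l = i then (if a = j then A $$ (j, i) * bar w else 0) else 0))"
      unfolding mat_trace_mult_eq_sum[OF herm_carrier[OF A] Zc]
      by (intro sum.cong refl) (use ij in \<open>auto simp: Z distrib_left\<close>)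
    also have "\<dots> = (\<Sum>a<n. (if a = i then A $$ (i, j) * w else 0) + (if a = j then A $$ (j, i) * bar w else 0))"
      by (intro sum.cong refl) (use ij in \<open>simp add: sum.distrib\<close>)
    also have "\<dots> = A $$ (i, j) * w + A $$ (j, i) * bar w"
      using ij by (simp add: sum.distrib)
    finally show ?thesis .
  qed
  moreover have "A $$ (i, j) * w + A $$ (j, i) * bar w = x"
    using ij y by (simp add: w_def flip: herm_entry[OF A ij(1,2)])
  ultimately show ?thesis
    by auto
qed

lemma char_sum_zero_diag_herm:
  fixes A :: "'a mat"
  assumes \<chi>: "nontrivial_add_char q \<chi>" and A: "A \<in> herm q n"
  shows "(\<Sum>Z\<in>zero_diag_herm q n. \<chi> (mat_trace (A * Z))) =
    (if diagonal_mat A then of_nat (card (zero_diag_herm q n :: 'a mat set)) else 0)"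
proof (cases "diagonal_mat A")
  case True
  have "mat_trace (A * Z) = 0" if "Z \<in> zero_diag_herm q n" for Z
  proof -
    have Zc: "Z \<in> carrier_mat n n" and Z: "\<forall>i<n. Z $$ (i, i) = 0"
      using that unfolding zero_diag_herm_def by (auto simp: herm_carrier)
    have zero: "A $$ (i, l) * Z $$ (l, i) = 0" if "i < n" "l < n" for i l
      using True herm_carrier[OF A] Z that unfolding diagonal_mat_def by (cases "i = l") auto
    show ?thesis
      unfolding mat_trace_mult_eq_sum[OF herm_carrier[OF A] Zc] by (intro sum.neutral ballI zero) auto
  qed
  then show ?thesis
    using True add_char_zero[OF \<chi>] by simp
next
  case False
  then obtain i j where ij: "i < n" "j < n" "i \<noteq> j" "A $$ (i, j) \<noteq> 0"
    using herm_carrier[OF A] unfolding diagonal_mat_def by auto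
  obtain x where x: "x \<in> Fq q" "\<chi> x \<noteq> 1"
    using \<chi> unfolding nontrivial_add_char_def by blast
  have "- x \<in> Fq q"
    using x(1) by (simp add: Fq_iff)
  then obtain Z0 where Z0: "Z0 \<in> zero_diag_herm q n" "mat_trace (A * Z0) = - x"
    using exists_zero_diag_herm_trace[OF A ij] by blast
  let ?S = "\<Sum>Z\<in>zero_diag_herm q n. \<chi> (mat_trace (A * Z))"
  \<comment> \<open>Translating the summation variable by \<open>Z0\<close> multiplies every term by \<open>\<chi> x \<noteq> 1\<close>.\<close>
  have "?S = (\<Sum>Z\<in>zero_diag_herm q n. \<chi> (mat_trace (A * (Z - Z0))))"
    using Z0(1) by (rule sum_zero_diag_herm_diff[symmetric])
  also have "\<dots> = (\<Sum>Z\<in>zero_diag_herm q n. \<chi> x * \<chi> (mat_trace (A * Z)))"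
  proof (rule sum.cong[OF refl])
    fix Z :: "'a mat"
    assume Z: "Z \<in> zero_diag_herm q n"
    have c: "A \<in> carrier_mat n n" "Z \<in> carrier_mat n n" "Z0 \<in> carrier_mat n n"
      using A Z Z0(1) by (auto dest!: zero_diag_herm_herm herm_carrier)
    have "mat_trace (A * (Z - Z0)) = mat_trace (A * Z) + x"
      using c Z0(2) by (simp add: mult_minus_distrib_mat[OF c] mat_trace_diff[of _ n])
    moreover have "mat_trace (A * Z) \<in> Fq q"
      using A zero_diag_herm_herm[OF Z] by (rule mat_trace_mult_herm_in_Fq)
    ultimately show "\<chi> (mat_trace (A * (Z - Z0))) = \<chi> x * \<chi> (mat_trace (A * Z))"
      using add_char_add[OF \<chi> _ x(1)] by (simp add: mult.commute)
  qed
  also have "\<dots> = \<chi> x * ?S"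
    by (simp add: sum_distrib_left)
  finally have "(1 - \<chi> x) * ?S = 0"
    by (simp add: algebra_simps)
  then show ?thesis
    using False x(2) by simp
qed

lemma sum_char_sum_rank_one_zero_diag_herm:
  fixes \<chi> :: "'a \<Rightarrow> complex"
  assumes \<chi>: "nontrivial_add_char q \<chi>"
  shows "(\<Sum>Z\<in>zero_diag_herm q n. char_sum_rank_one n \<chi> Z) =
    of_nat (card (zero_diag_herm q n :: 'a mat set)) * of_nat (card {A \<in> herm_rank q n 1 :: 'a mat set. diagonal_mat A})"
proof -
  let ?M = "zero_diag_herm q n :: 'a mat set"
  let ?H = "herm_rank q n 1 :: 'a mat set"
  have "(\<Sum>Z\<in>?M. char_sum_rank_one n \<chi> Z) = (\<Sum>A\<in>?H. \<Sum>Z\<in>?M. \<chi> (mat_trace (A * Z)))"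
    unfolding char_sum_rank_one_def by (subst sum.swap) (auto simp: herm_rank_def pairing_herm intro!: sum.cong)
  also have "\<dots> = (\<Sum>A\<in>?H. if diagonal_mat A then of_nat (card ?M) else 0)"
  proof (rule sum.cong[OF refl])
    fix A :: "'a mat"
    assume "A \<in> ?H"
    then show "(\<Sum>Z\<in>?M. \<chi> (mat_trace (A * Z))) = (if diagonal_mat A then of_nat (card ?M) else 0)"
      unfolding herm_rank_def using char_sum_zero_diag_herm[OF \<chi>] by blast
  qed
  also have "\<dots> = (\<Sum>A\<in>{A \<in> ?H. diagonal_mat A}. of_nat (card ?M))"
    by (rule sum.inter_filter[symmetric, OF finite_herm_rank])
  finally show ?thesis
    by (simp add: mult.commute)
qed

lemma dual_inner_dist_1_eq_sum_char_sum_rank_one: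
  fixes C :: "'a mat set" and \<chi> :: "'a \<Rightarrow> complex"
  assumes C: "finite C" "C \<noteq> {}" "C \<subseteq> herm q n"
    and add: "\<And>X Y. X \<in> C \<Longrightarrow> Y \<in> C \<Longrightarrow> X + Y \<in> C"
    and diff: "\<And>X Y. X \<in> C \<Longrightarrow> Y \<in> C \<Longrightarrow> X - Y \<in> C"
  shows "dual_inner_dist q n \<chi> C 1 = (\<Sum>Z\<in>C. char_sum_rank_one n \<chi> Z)"
proof -
  let ?f = "\<lambda>p. char_sum_rank_one n \<chi> (fst p - snd p)"
  define D where "D i = {p \<in> C \<times> C. mat_rank n (fst p - snd p) = i}" for i
  have herm_diff: "fst p - snd p \<in> herm q n" if "p \<in> C \<times> C" for p
    using that diff C(3) by (auto simp: mem_Times_iff)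
  have Q: "Qnum q n \<chi> 1 i * of_nat (card (D i)) = (\<Sum>p\<in>D i. ?f p)" for i
  proof -
    have "?f p = Qnum q n \<chi> 1 i" if "p \<in> D i" for p
      using that herm_diff Qnum_1_eq_char_sum_rank_one unfolding D_def herm_rank_def by auto
    then show ?thesis
      by (simp add: mult.commute)
  qed
  have rank_le: "mat_rank n (fst p - snd p) \<le> n" if "p \<in> C \<times> C" for p
    using mat_rank_le[OF herm_carrier[OF herm_diff[OF that]]] .
  have D: "{(X, Y). X \<in> C \<and> Y \<in> C \<and> mat_rank n (X - Y) = i} = D i" for i
    unfolding D_def by auto
  have "dual_inner_dist q n \<chi> C 1 = (\<Sum>i\<le>n. Qnum q n \<chi> 1 i * of_nat (card (D i)) / of_nat (card C))"
    unfolding dual_inner_dist_def inner_dist_def D by (simp add: of_real_divide)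
  also have "\<dots> = (\<Sum>i\<le>n. \<Sum>p\<in>D i. ?f p) / of_nat (card C)"
    unfolding Q by (simp add: sum_divide_distrib)
  also have "(\<Sum>i\<le>n. \<Sum>p\<in>D i. ?f p) = (\<Sum>p\<in>C \<times> C. ?f p)"
    unfolding D_def using C(1) rank_le by (intro sum.group) auto
  also have "\<dots> = (\<Sum>X\<in>C. \<Sum>Y\<in>C. char_sum_rank_one n \<chi> (X - Y))"
    by (simp add: sum.cartesian_product split_def)
  also have "\<dots> = (\<Sum>Y\<in>C. \<Sum>X\<in>C. char_sum_rank_one n \<chi> (X - Y))"
    by (rule sum.swap)
  also have "\<dots> = of_nat (card C) * (\<Sum>Z\<in>C. char_sum_rank_one n \<chi> Z)"
  proof -
    have "C \<subseteq> carrier_mat n n"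
      using C(3) herm_carrier by blast
    then have "(\<Sum>X\<in>C. char_sum_rank_one n \<chi> (X - Y)) = (\<Sum>Z\<in>C. char_sum_rank_one n \<chi> Z)" if "Y \<in> C" for Y
      using add diff that by (rule sum_diff_closed_eq)
    then show ?thesis
      by simp
  qed
  finally show ?thesis
    using C(1,2) by simp
qed

lemma dual_inner_dist_zero_diag_herm_1:
  fixes \<chi> :: "'a \<Rightarrow> complex"
  assumes "nontrivial_add_char q \<chi>"
  shows "dual_inner_dist q n \<chi> (zero_diag_herm q n) 1 =
    of_nat (card (zero_diag_herm q n :: 'a mat set)) * of_nat (card {A \<in> herm_rank q n 1 :: 'a mat set. diagonal_mat A})"
proof -
  have "dual_inner_dist q n \<chi> (zero_diag_herm q n) 1 = (\<Sum>Z\<in>zero_diag_herm q n. char_sum_rank_one n \<chi> Z)"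
    using zero_mat_in_zero_diag_herm[of n] zero_diag_herm_herm zero_diag_herm_add zero_diag_herm_diff
    by (intro dual_inner_dist_1_eq_sum_char_sum_rank_one finite_zero_diag_herm) auto
  then show ?thesis
    by (simp add: sum_char_sum_rank_one_zero_diag_herm[OF assms])
qed

lemma dual_inner_dist_zero_diag_herm_1_neq_0:
  fixes \<chi> :: "'a \<Rightarrow> complex"
  assumes "nontrivial_add_char q \<chi>" "1 \<le> n"
  shows "dual_inner_dist q n \<chi> (zero_diag_herm q n) 1 \<noteq> 0"
proof -
  have "partial_one_mat n 1 \<in> {A \<in> herm_rank q n 1 :: 'a mat set. diagonal_mat A}"
    using mat_rank_partial_one_mat[OF assms(2)]
    by (auto simp: herm_rank_def diagonal_mat_def intro!: hermI)
  then have "card {A \<in> herm_rank q n 1 :: 'a mat set. diagonal_mat A} \<noteq> 0"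
    using finite_herm_rank by auto
  moreover have "card (zero_diag_herm q n :: 'a mat set) \<noteq> 0"
    using zero_mat_in_zero_diag_herm finite_zero_diag_herm by auto
  ultimately show ?thesis
    unfolding dual_inner_dist_zero_diag_herm_1[OF assms(1)] by simp
qed

end

lemma field_q2I:
  fixes p k q :: nat
  assumes "prime p" "q = p ^ k" "card (UNIV :: 'a::{field,finite} set) = q\<^sup>2"
  shows "field_q2 TYPE('a) q"
proof (rule field_q2.intro)
  have "prime CHAR('a)"
    by (intro prime_CHAR_semidom finite_imp_CHAR_pos) simp
  moreover have "CHAR('a) dvd p ^ (2 * k)"
    using CHAR_dvd_CARD[where 'a = 'a] assms(2,3) by (simp add: power_mult[symmetric] mult.commute)
  ultimately have "CHAR('a) = p"
    using assms(1) by (metis prime_dvd_power primes_dvd_imp_eq)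
  then show "\<exists>k. q = CHAR('a) ^ k"
    using assms(2) by blast
qed (rule assms(3))

theorem theorem5p5:
  fixes q n :: nat and \<chi> :: "'a::{field,finite} \<Rightarrow> complex"
  assumes "\<exists>p k. prime p \<and> k > 0 \<and> q = p ^ k"
    and "card (UNIV :: 'a set) = q ^ 2"
    and "n \<ge> 2"
    and "nontrivial_add_char q \<chi>"
  shows "\<forall>t. 1 \<le> t \<and> t \<le> n \<longrightarrow> \<not> is_t_design q n \<chi> t (zero_diag_herm q n :: 'a mat set)"
proof -
  obtain p k where "prime p" "q = p ^ k"
    using assms(1) by blast
  then interpret field_q2 q "TYPE('a)"
    using assms(2) by (rule field_q2I)
  show ?thesis
  proof (intro allI impI notI)
    fix t
    assume "1 \<le> t \<and> t \<le> n" "is_t_design q n \<chi> t (zero_diag_herm q n :: 'a mat set)"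
    then have "dual_inner_dist q n \<chi> (zero_diag_herm q n :: 'a mat set) 1 = 0"
      unfolding is_t_design_def by auto
    then show False
      using dual_inner_dist_zero_diag_herm_1_neq_0[OF assms(4)] assms(3) by simp
  qed
qed

end
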